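(* Let $X_0^*$ be a $\{1,2,\dots\}$-valued random variable with $\mathbf P(X_0^*\ge2)>0$ and $\mathbf E(X_0^*m^{X_0^*})<\infty$, let $p>p_c$, let $X_0$ have law $(1-p)\delta_0+pP_{X_0^*}$, and let $n\ge0$. Then: (i) $\Theta_n(s)\in[0,1+\delta_n]$ for all $s\in[0,m)$; (ii) if $\delta_n\le1$, then for all $s\in[\frac m2,m)$, $$\Theta_{n+1}(s)\ge\frac ms\,\Theta_n(s)\,H_n(s)^{m-1}-\frac{\kappa(m-s)}{s}\,[\delta_n-\varphi_n(s)]^2H_n(s)^{m-2},$$ where $\kappa:=3^{m-2}+1$.
   Context: Fix an integer $m\ge2$. Recursive system: $X_{n+1}$ has the law of $(X_{n,1}+\cdots+X_{n,m}-1)^+$, with $X_{n,i}$ independent copies of $X_n$. $p_c:=\frac{1}{1+\mathbf E\{[(m-1)X_0^*-1]m^{X_0^*}\}}$. $H_n(s):=\mathbf E(s^{X_n})$; $\delta_n:=(m-1)\mathbf E(X_nm^{X_n})-\mathbf E(m^{X_n})$; $\varphi_n(s):=(m-1)sH_n'(s)-H_n(s)$; and $$\Theta_n(s):=[H_n(s)-s(s-1)H_n'(s)]-\frac{(m-1)(m-s)}{m}[2sH_n'(s)+s^2H_n''(s)]+\delta_n .$$ *)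

theory Defs
  imports "HOL-Probability.Probability"
begin

fun sum_iid :: "nat \<Rightarrow> nat pmf \<Rightarrow> nat pmf" where
  "sum_iid 0 q = return_pmf 0"
| "sum_iid (Suc k) q = bind_pmf q (\<lambda>x. map_pmf (\<lambda>y. x + y) (sum_iid k q))"

text \<open>One step of the recursive system: law of (X_1+...+X_m - 1)^+ (truncated nat subtraction).\<close>
definition step :: "nat \<Rightarrow> nat pmf \<Rightarrow> nat pmf" where
  "step m q = map_pmf (\<lambda>k. k - 1) (sum_iid m q)"

definition X0law :: "real \<Rightarrow> nat pmf \<Rightarrow> nat pmf" where
  "X0law p Xs = bind_pmf (bernoulli_pmf p) (\<lambda>b. if b then Xs else return_pmf 0)"

definition lawX :: "nat \<Rightarrow> real \<Rightarrow> nat pmf \<Rightarrow> nat \<Rightarrow> nat pmf" where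
  "lawX m p Xs n = (step m ^^ n) (X0law p Xs)"

definition p_crit :: "nat \<Rightarrow> nat pmf \<Rightarrow> real" where
  "p_crit m Xs = 1 / (1 + measure_pmf.expectation Xs
       (\<lambda>k. ((real m - 1) * real k - 1) * real m ^ k))"

definition Hgf :: "nat pmf \<Rightarrow> real \<Rightarrow> real" where
  "Hgf q s = measure_pmf.expectation q (\<lambda>k. s ^ k)"

definition delta :: "nat \<Rightarrow> nat pmf \<Rightarrow> real" where
  "delta m q = (real m - 1) * measure_pmf.expectation q (\<lambda>k. real k * real m ^ k)
               - measure_pmf.expectation q (\<lambda>k. real m ^ k)"

definition phi :: "nat \<Rightarrow> nat pmf \<Rightarrow> real \<Rightarrow> real" where
  "phi m q s = (real m - 1) * s * deriv (Hgf q) s - Hgf q s"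

definition Theta :: "nat \<Rightarrow> nat pmf \<Rightarrow> real \<Rightarrow> real" where
  "Theta m q s = (Hgf q s - s * (s - 1) * deriv (Hgf q) s)
     - (real m - 1) * (real m - s) / real m
         * (2 * s * deriv (Hgf q) s + s\<^sup>2 * deriv (deriv (Hgf q)) s)
     + delta m q"

end

theory Submission
  imports Defs
begin

(*
  All quantities are power series in s with coefficients P(X_n = k), convergent for |s| <= m
  because E(X m^X) < oo.  Thus Theta_n(s) = sum_k P(X_n = k) theta_k(s), where each theta_k decreases
  on [0, m] from [k = 0] + ((m-1)k - 1) m^k to 0; this gives (i).

  For (ii), H_{n+1}(s) = H_n(s)^m / s + c (1 - 1/s) and delta_{n+1} = H_n(m)^(m-1) delta_n.
  Differentiating twice, the unknown constant c cancels and
    Theta_{n+1} - (m/s) Theta_n H_n^(m-1)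
      = (H_n(m)^(m-1) - (m/s) H_n(s)^(m-1)) delta_n - (m-s) H_n^(m-2) phi_n^2 / s.
  The tangent bound H_n(m) >= H_n(s) + (m-s) H_n'(s) shows that the right-hand side is at least
  (m-s) H_n^(m-2) phi_n (delta_n - phi_n) / s, and phi_n <= delta_n (termwise, as s <= m) bounds
  this below by -kappa (m-s) (delta_n - phi_n)^2 H_n^(m-2) / s for every kappa >= 1, provided
  delta_n >= 0.  That positivity propagates along delta_{n+1} = H_n(m)^(m-1) delta_n from
  delta_0 = p (1 + delta(X*_0)) - 1 > 0, which is exactly the condition p > p_c.
*)

lemma sums_expectation_pmf_nat:
  fixes q :: "nat pmf" and f :: "nat \<Rightarrow> real"
  assumes "integrable q f"
  shows "(\<lambda>k. pmf q k * f k) sums measure_pmf.expectation q f"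
proof -
  have "integrable (count_space UNIV) (\<lambda>k. pmf q k * f k)"
    using assms unfolding measure_pmf_eq_density by (subst (asm) integrable_density) auto
  moreover have "measure_pmf.expectation q f = integral\<^sup>L (count_space UNIV) (\<lambda>k. pmf q k * f k)"
    unfolding measure_pmf_eq_density by (subst integral_density) auto
  ultimately show ?thesis using sums_integral_count_space_nat by simp
qed

lemma integrable_pmf_nat_if_summable:
  fixes q :: "nat pmf" and f :: "nat \<Rightarrow> real"
  assumes "summable (\<lambda>k. pmf q k * \<bar>f k\<bar>)"
  shows "integrable q f"
proof -
  have "integrable (count_space UNIV) (\<lambda>k. pmf q k * f k)"
    unfolding integrable_count_space_nat_iff using assms by (simp add: abs_mult)
  then show ?thesis unfolding measure_pmf_eq_density by (subst integrable_density) auto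
qed

lemma integrable_expectation_pmf_of_nn_integral:
  fixes q :: "'a pmf" and f :: "'a \<Rightarrow> real"
  assumes "\<And>k. 0 \<le> f k" "0 \<le> x" "(\<integral>\<^sup>+k. ennreal (f k) \<partial>q) = ennreal x"
  shows "integrable q f" "measure_pmf.expectation q f = x"
  using has_bochner_integral_nn_integral[of f q x] assms by (auto simp: has_bochner_integral_iff)

lemma powser_sums_deriv:
  fixes f :: "real \<Rightarrow> real" and c :: "nat \<Rightarrow> real"
  assumes sums: "\<And>z. \<bar>z\<bar> < K \<Longrightarrow> (\<lambda>n. c n * z ^ n) sums f z" and x: "\<bar>x\<bar> < K"
  shows "(f has_field_derivative deriv f x) (at x)"
    and "(\<lambda>n. diffs c n * x ^ n) sums deriv f x"
proof -
  have summable: "\<And>z. norm z < K \<Longrightarrow> summable (\<lambda>n. c n * z ^ n)"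
    using sums by (auto simp: sums_iff)
  have "((\<lambda>z. \<Sum>n. c n * z ^ n) has_field_derivative (\<Sum>n. diffs c n * x ^ n)) (at x)"
    by (rule termdiffs_strong'[OF summable]) (use x in auto)
  then have D: "(f has_field_derivative (\<Sum>n. diffs c n * x ^ n)) (at x)"
  proof (rule has_field_derivative_transform_within_open[of _ _ _ "ball 0 K"])
    show "x \<in> ball 0 K" using x by simp
    show "(\<Sum>n. c n * z ^ n) = f z" if "z \<in> ball 0 K" for z
      using sums[of z] that by (simp add: sums_iff)
  qed simp
  then show "(f has_field_derivative deriv f x) (at x)"
    by (simp add: DERIV_imp_deriv)
  have "summable (\<lambda>n. diffs c n * x ^ n)"
    by (rule termdiff_converges[OF _ summable]) (use x in auto)
  then show "(\<lambda>n. diffs c n * x ^ n) sums deriv f x"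
    using DERIV_imp_deriv[OF D] by (simp add: summable_sums)
qed

lemma diffs_sums_times_x:
  fixes c :: "nat \<Rightarrow> real"
  assumes "(\<lambda>n. diffs c n * x ^ n) sums D"
  shows "(\<lambda>k. c k * (real k * x ^ k)) sums (x * D)"
proof -
  have "(\<lambda>n. x * (diffs c n * x ^ n)) sums (x * D)" by (rule sums_mult[OF assms])
  moreover have "(\<lambda>n. x * (diffs c n * x ^ n)) = (\<lambda>n. c (Suc n) * (real (Suc n) * x ^ Suc n))"
    by (simp add: diffs_def algebra_simps)
  ultimately have "(\<lambda>n. c (Suc n) * (real (Suc n) * x ^ Suc n)) sums (x * D)" by simp
  then show ?thesis by (subst (asm) sums_Suc_iff) simp
qed

lemma diffs2_sums_times_x2:
  fixes c :: "nat \<Rightarrow> real"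
  assumes "(\<lambda>n. diffs (diffs c) n * x ^ n) sums D"
  shows "(\<lambda>k. c k * (real k * (real k - 1) * x ^ k)) sums (x\<^sup>2 * D)"
proof -
  have "(\<lambda>n. x\<^sup>2 * (diffs (diffs c) n * x ^ n)) sums (x\<^sup>2 * D)" by (rule sums_mult[OF assms])
  moreover have "(\<lambda>n. x\<^sup>2 * (diffs (diffs c) n * x ^ n))
      = (\<lambda>n. c (Suc (Suc n)) * (real (Suc (Suc n)) * (real (Suc (Suc n)) - 1) * x ^ Suc (Suc n)))"
    by (simp add: diffs_def algebra_simps power2_eq_square)
  ultimately have "(\<lambda>n. c (Suc (Suc n)) *
      (real (Suc (Suc n)) * (real (Suc (Suc n)) - 1) * x ^ Suc (Suc n))) sums (x\<^sup>2 * D)"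
    by simp
  then have "(\<lambda>n. c (Suc n) * (real (Suc n) * (real (Suc n) - 1) * x ^ Suc n)) sums (x\<^sup>2 * D)"
    by (subst (asm) sums_Suc_iff) simp
  then show ?thesis by (subst (asm) sums_Suc_iff) simp
qed

lemma Hgf_nonneg: "0 \<le> x \<Longrightarrow> 0 \<le> Hgf q x"
  unfolding Hgf_def by (rule Bochner_Integration.integral_nonneg) simp

definition theta_coeff :: "real \<Rightarrow> nat \<Rightarrow> real \<Rightarrow> real" where
  "theta_coeff M k s = s ^ k - (s - 1) * (real k * s ^ k)
     - (M - 1) * (M - s) / M * (real k * (real k + 1) * s ^ k) + ((M - 1) * real k - 1) * M ^ k"

lemma theta_coeff_has_real_derivative:
  assumes "M \<noteq> 0"
  shows "(theta_coeff M k has_real_derivative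
           - (real k * ((M - 1) * real k - 1) * (real k + 1) * (M - s) / M * s ^ (k - 1))) (at s)"
proof -
  define a where "a = 1 + real k - (M - 1) * real k * (real k + 1)"
  define b where "b = (M - 1) * real k * (real k + 1) / M - real k"
  have poly: "theta_coeff M k = (\<lambda>s. a * s ^ k + b * s ^ Suc k + ((M - 1) * real k - 1) * M ^ k)"
    using assms by (auto simp: theta_coeff_def a_def b_def field_simps)
  have "(theta_coeff M k has_real_derivative a * (real k * s ^ (k - 1)) + b * (real (Suc k) * s ^ k)) (at s)"
    unfolding poly by (auto intro!: derivative_eq_intros simp del: power_Suc)
  moreover have "a * (real k * s ^ (k - 1)) + b * (real (Suc k) * s ^ k)
      = - (real k * ((M - 1) * real k - 1) * (real k + 1) * (M - s) / M * s ^ (k - 1))"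
    using assms by (cases k) (auto simp: a_def b_def field_simps)
  ultimately show ?thesis by simp
qed

lemma theta_coeff_antimono:
  assumes "M \<ge> 2" "0 \<le> s" "s \<le> t" "t \<le> M"
  shows "theta_coeff M k t \<le> theta_coeff M k s"
proof -
  have c: "real k * ((M - 1) * real k - 1) \<ge> 0"
    using mult_mono[of 1 "M - 1" 1 "real k"] assms by (cases "k = 0") auto
  have "0 \<le> real k * ((M - 1) * real k - 1) * (real k + 1) * (M - x) / M * x ^ (k - 1)"
    if "0 \<le> x" "x \<le> M" for x
    using assms that by (intro mult_nonneg_nonneg[OF divide_nonneg_nonneg] mult_nonneg_nonneg[OF mult_nonneg_nonneg[OF c]]) auto
  then have "- theta_coeff M k s \<le> - theta_coeff M k t"
    using assms
    by (intro DERIV_nonneg_imp_nondecreasing[where f = "\<lambda>x. - theta_coeff M k x"])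
       (auto intro!: exI DERIV_minus[OF theta_coeff_has_real_derivative])
  then show ?thesis by simp
qed

lemma power_diff_ge_tangent:
  fixes a b :: real
  assumes "0 \<le> a" "a \<le> b"
  shows "real k * a ^ (k - 1) * (b - a) \<le> b ^ k - a ^ k"
proof (induction k)
  case (Suc k)
  have "a * (real k * a ^ (k - 1) * (b - a)) \<le> b * (real k * a ^ (k - 1) * (b - a))"
    using assms by (intro mult_right_mono) auto
  also have "\<dots> \<le> b * (b ^ k - a ^ k)"
    using Suc assms by (intro mult_left_mono) auto
  finally have "real k * a ^ k * (b - a) \<le> b * (b ^ k - a ^ k)"
    by (cases k) (auto simp: algebra_simps)
  then show ?case by (simp add: algebra_simps)
qed simp

locale finite_moment =
  fixes m :: nat and q :: "nat pmf"
  assumes m_pos: "m \<ge> 1"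
    and moment: "integrable q (\<lambda>k. real k * real m ^ k)"
begin

lemma integrable_pow:
  assumes "\<bar>x\<bar> \<le> real m"
  shows "integrable q (\<lambda>k. x ^ k)"
proof (rule integrable_pmf_nat_if_summable)
  have "summable (\<lambda>k. pmf q k * (real k * real m ^ k) + pmf q k)"
    using sums_expectation_pmf_nat[OF moment] sums_expectation_pmf_nat[of q "\<lambda>_. 1"]
    by (intro summable_add) (auto simp: sums_iff)
  then show "summable (\<lambda>k. pmf q k * \<bar>x ^ k\<bar>)"
  proof (rule summable_comparison_test')
    fix k
    have "\<bar>x ^ k\<bar> \<le> real m ^ k"
      using assms by (simp add: power_abs power_mono)
    also have "\<dots> \<le> real k * real m ^ k + 1"
      by (cases k) (auto simp: algebra_simps)
    finally show "norm (pmf q k * \<bar>x ^ k\<bar>) \<le> pmf q k * (real k * real m ^ k) + pmf q k"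
      using mult_left_mono[OF _ pmf_nonneg] by (fastforce simp: algebra_simps)
  qed
qed

lemma Hgf_sums:
  assumes "\<bar>x\<bar> \<le> real m"
  shows "(\<lambda>k. pmf q k * x ^ k) sums Hgf q x"
  unfolding Hgf_def by (rule sums_expectation_pmf_nat[OF integrable_pow[OF assms]])

lemma
  assumes "\<bar>x\<bar> < real m"
  shows has_field_derivative_Hgf: "(Hgf q has_field_derivative deriv (Hgf q) x) (at x)"
    and deriv_Hgf_sums: "(\<lambda>k. pmf q k * (real k * x ^ k)) sums (x * deriv (Hgf q) x)"
    and has_field_derivative_deriv_Hgf:
      "(deriv (Hgf q) has_field_derivative deriv (deriv (Hgf q)) x) (at x)"
    and deriv2_Hgf_sums:
      "(\<lambda>k. pmf q k * (real k * (real k - 1) * x ^ k)) sums (x\<^sup>2 * deriv (deriv (Hgf q)) x)"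
proof -
  have H: "(\<lambda>n. pmf q n * z ^ n) sums Hgf q z" if "\<bar>z\<bar> < real m" for z
    using Hgf_sums that by simp
  have H': "(\<lambda>n. diffs (pmf q) n * z ^ n) sums deriv (Hgf q) z" if "\<bar>z\<bar> < real m" for z
    by (rule powser_sums_deriv(2)[OF H that])
  show "(Hgf q has_field_derivative deriv (Hgf q) x) (at x)"
    by (rule powser_sums_deriv(1)[OF H assms])
  show "(\<lambda>k. pmf q k * (real k * x ^ k)) sums (x * deriv (Hgf q) x)"
    by (rule diffs_sums_times_x[OF H'[OF assms]])
  show "(deriv (Hgf q) has_field_derivative deriv (deriv (Hgf q)) x) (at x)"
    by (rule powser_sums_deriv(1)[OF H' assms])
  show "(\<lambda>k. pmf q k * (real k * (real k - 1) * x ^ k)) sums (x\<^sup>2 * deriv (deriv (Hgf q)) x)"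
    by (rule diffs2_sums_times_x2[OF powser_sums_deriv(2)[OF H' assms]])
qed

lemma delta_sums: "(\<lambda>k. pmf q k * (((real m - 1) * real k - 1) * real m ^ k)) sums delta m q"
proof -
  have "(\<lambda>k. (real m - 1) * (pmf q k * (real k * real m ^ k)) - pmf q k * real m ^ k) sums delta m q"
    unfolding delta_def
    by (intro sums_diff sums_mult sums_expectation_pmf_nat moment integrable_pow) simp
  then show ?thesis by (simp add: algebra_simps)
qed

lemma Theta_sums:
  assumes "\<bar>s\<bar> < real m"
  shows "(\<lambda>k. pmf q k * theta_coeff (real m) k s) sums Theta m q s"
proof -
  define C where "C = (real m - 1) * (real m - s) / real m"
  have "(\<lambda>k. pmf q k * s ^ k - (s - 1) * (pmf q k * (real k * s ^ k))
        - C * (2 * (pmf q k * (real k * s ^ k)) + pmf q k * (real k * (real k - 1) * s ^ k))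
        + pmf q k * (((real m - 1) * real k - 1) * real m ^ k))
     sums (Hgf q s - (s - 1) * (s * deriv (Hgf q) s)
        - C * (2 * (s * deriv (Hgf q) s) + s\<^sup>2 * deriv (deriv (Hgf q)) s) + delta m q)"
    using assms
    by (intro sums_add sums_diff sums_mult Hgf_sums deriv_Hgf_sums deriv2_Hgf_sums delta_sums) auto
  then show ?thesis
    using m_pos by (simp add: Theta_def theta_coeff_def C_def field_simps)
qed

lemma Theta_bounds:
  assumes "m \<ge> 2" "0 \<le> s" "s < real m"
  shows "0 \<le> Theta m q s" "Theta m q s \<le> 1 + delta m q"
proof -
  have M: "real m \<ge> 2" "\<bar>s\<bar> < real m" using assms by auto
  have theta_M: "theta_coeff (real m) k (real m) = 0" for k
    by (simp add: theta_coeff_def algebra_simps)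
  have theta_0: "theta_coeff (real m) k 0 = (if k = 0 then 1 else 0) + ((real m - 1) * real k - 1) * real m ^ k" for k
    by (cases k) (simp_all add: theta_coeff_def)
  show "0 \<le> Theta m q s"
    using theta_coeff_antimono[OF M(1) assms(2) _ order_refl] theta_M assms
    by (intro sums_le[OF _ sums_zero Theta_sums[OF M(2)]] mult_nonneg_nonneg) auto
  have upper: "(\<lambda>k. pmf q k * (if k = 0 then 1 else 0) + pmf q k * (((real m - 1) * real k - 1) * real m ^ k))
      sums (pmf q 0 + delta m q)"
  proof (intro sums_add delta_sums)
    show "(\<lambda>k. pmf q k * (if k = 0 then 1 else 0)) sums pmf q 0"
      using sums_single[of 0 "pmf q"] by (simp add: if_distrib cong: if_cong)
  qed
  have "pmf q k * theta_coeff (real m) k s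
      \<le> pmf q k * (if k = 0 then 1 else 0) + pmf q k * (((real m - 1) * real k - 1) * real m ^ k)" for k
    unfolding distrib_left[symmetric] theta_0[symmetric]
    using assms by (intro mult_left_mono theta_coeff_antimono) auto
  then have "Theta m q s \<le> pmf q 0 + delta m q"
    using sums_le[OF _ Theta_sums[OF M(2)] upper] by blast
  then show "Theta m q s \<le> 1 + delta m q"
    using pmf_le_1[of q 0] by linarith
qed

lemma deriv_Hgf_nonneg:
  assumes "0 < s" "s < real m"
  shows "0 \<le> deriv (Hgf q) s"
proof -
  have "0 \<le> s * deriv (Hgf q) s"
    using assms by (intro sums_le[OF _ sums_zero deriv_Hgf_sums]) auto
  then show ?thesis using assms by (simp add: zero_le_mult_iff)
qed

lemma Hgf_tangent_le:
  assumes "0 < s" "s < real m"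
  shows "Hgf q s + (real m - s) * deriv (Hgf q) s \<le> Hgf q (real m)"
proof -
  have tangent: "(real m - s) / s * (real k * s ^ k) \<le> real m ^ k - s ^ k" for k
  proof (cases k)
    case (Suc i)
    then have "(real m - s) / s * (real k * s ^ k) = real k * s ^ (k - 1) * (real m - s)"
      using assms by (simp add: field_simps)
    also have "\<dots> \<le> real m ^ k - s ^ k"
      using assms by (intro power_diff_ge_tangent) auto
    finally show ?thesis .
  qed simp
  have "(real m - s) / s * (s * deriv (Hgf q) s) \<le> Hgf q (real m) - Hgf q s"
  proof (rule sums_le[OF _ sums_mult[OF deriv_Hgf_sums] sums_diff[OF Hgf_sums Hgf_sums]])
    show "(real m - s) / s * (pmf q k * (real k * s ^ k)) \<le> pmf q k * real m ^ k - pmf q k * s ^ k" for k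
      using mult_left_mono[OF tangent[of k] pmf_nonneg[of q k]] by (simp add: algebra_simps)
  qed (use assms in auto)
  then show ?thesis using assms by simp
qed

lemma phi_le_delta:
  assumes "m \<ge> 2" "0 \<le> s" "s < real m"
  shows "phi m q s \<le> delta m q"
proof (rule sums_le[OF _ _ delta_sums])
  show "(\<lambda>k. (real m - 1) * (pmf q k * (real k * s ^ k)) - pmf q k * s ^ k) sums phi m q s"
    unfolding phi_def mult.assoc using assms
    by (intro sums_diff sums_mult deriv_Hgf_sums Hgf_sums) auto
  fix k
  have "((real m - 1) * real k - 1) * s ^ k \<le> ((real m - 1) * real k - 1) * real m ^ k"
  proof (cases k)
    case (Suc i)
    then have "(real m - 1) * real k \<ge> 1 * 1" using assms by (intro mult_mono) auto
    then show ?thesis using assms by (intro mult_left_mono power_mono) auto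
  qed simp
  then show "(real m - 1) * (pmf q k * (real k * s ^ k)) - pmf q k * s ^ k
      \<le> pmf q k * (((real m - 1) * real k - 1) * real m ^ k)"
    using mult_left_mono[OF _ pmf_nonneg] by (fastforce simp: algebra_simps)
qed

end


lemma nn_integral_pow_sum_iid:
  fixes x :: real
  assumes "0 \<le> x"
  shows "(\<integral>\<^sup>+k. ennreal (x ^ k) \<partial>sum_iid j q) = (\<integral>\<^sup>+k. ennreal (x ^ k) \<partial>q) ^ j"
proof (induction j)
  case (Suc j)
  have "(\<integral>\<^sup>+k. ennreal (x ^ k) \<partial>sum_iid (Suc j) q)
      = (\<integral>\<^sup>+a. ennreal (x ^ a) * (\<integral>\<^sup>+b. ennreal (x ^ b) \<partial>sum_iid j q) \<partial>q)"
    using assms by (simp add: power_add ennreal_mult nn_integral_cmult)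
  then show ?case using Suc by (simp add: nn_integral_multc mult.commute)
qed simp

lemma nn_integral_k_pow_sum_iid:
  fixes x :: real
  assumes "0 \<le> x"
  shows "(\<integral>\<^sup>+k. ennreal (real k * x ^ k) \<partial>sum_iid j q)
     = of_nat j * (\<integral>\<^sup>+k. ennreal (x ^ k) \<partial>q) ^ (j - 1) * (\<integral>\<^sup>+k. ennreal (real k * x ^ k) \<partial>q)"
proof (induction j)
  case (Suc j)
  define H where "H = (\<integral>\<^sup>+k. ennreal (x ^ k) \<partial>q)"
  define A where "A = (\<integral>\<^sup>+k. ennreal (real k * x ^ k) \<partial>q)"
  have split: "ennreal ((real a + real b) * x ^ (a + b))
      = ennreal (real a * x ^ a) * ennreal (x ^ b) + ennreal (x ^ a) * ennreal (real b * x ^ b)" for a b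
    using assms by (simp add: power_add algebra_simps flip: ennreal_plus ennreal_mult)
  have "(\<integral>\<^sup>+k. ennreal (real k * x ^ k) \<partial>sum_iid (Suc j) q)
      = (\<integral>\<^sup>+a. ennreal (real a * x ^ a) * (\<integral>\<^sup>+b. ennreal (x ^ b) \<partial>sum_iid j q)
           + ennreal (x ^ a) * (\<integral>\<^sup>+b. ennreal (real b * x ^ b) \<partial>sum_iid j q) \<partial>q)"
    by (simp add: split nn_integral_add nn_integral_cmult)
  also have "\<dots> = A * H ^ j + H * (of_nat j * H ^ (j - 1) * A)"
    by (simp add: nn_integral_add nn_integral_multc nn_integral_pow_sum_iid[OF assms]
        Suc[folded H_def A_def] H_def A_def)
  also have "\<dots> = of_nat (Suc j) * H ^ (Suc j - 1) * A"
    by (cases j) (simp_all add: algebra_simps)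
  finally show ?case unfolding H_def A_def .
qed simp

context finite_moment
begin

lemma Hgf_sum_iid:
  assumes "0 \<le> x" "x \<le> real m"
  shows "integrable (sum_iid j q) (\<lambda>k. x ^ k)" "Hgf (sum_iid j q) x = Hgf q x ^ j"
proof -
  have "(\<integral>\<^sup>+k. ennreal (x ^ k) \<partial>q) = ennreal (Hgf q x)"
    unfolding Hgf_def using assms integrable_pow by (intro nn_integral_eq_integral) auto
  then have "(\<integral>\<^sup>+k. ennreal (x ^ k) \<partial>sum_iid j q) = ennreal (Hgf q x ^ j)"
    using assms Hgf_nonneg by (simp add: nn_integral_pow_sum_iid ennreal_power)
  from integrable_expectation_pmf_of_nn_integral[OF _ _ this]
  show "integrable (sum_iid j q) (\<lambda>k. x ^ k)" "Hgf (sum_iid j q) x = Hgf q x ^ j"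
    using assms Hgf_nonneg by (auto simp: Hgf_def)
qed

lemma moment_sum_iid:
  "integrable (sum_iid j q) (\<lambda>k. real k * real m ^ k)"
  "measure_pmf.expectation (sum_iid j q) (\<lambda>k. real k * real m ^ k)
     = real j * Hgf q (real m) ^ (j - 1) * measure_pmf.expectation q (\<lambda>k. real k * real m ^ k)"
proof -
  have A: "0 \<le> measure_pmf.expectation q (\<lambda>k. real k * real m ^ k)"
    by (rule Bochner_Integration.integral_nonneg) simp
  have H: "0 \<le> Hgf q (real m)" by (simp add: Hgf_nonneg)
  have "(\<integral>\<^sup>+k. ennreal (x ^ k) \<partial>q) = ennreal (Hgf q x)" if "x = real m" for x
    unfolding Hgf_def that using integrable_pow by (intro nn_integral_eq_integral) auto
  moreover have "(\<integral>\<^sup>+k. ennreal (real k * real m ^ k) \<partial>q)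
      = ennreal (measure_pmf.expectation q (\<lambda>k. real k * real m ^ k))"
    using moment by (intro nn_integral_eq_integral) auto
  ultimately have "(\<integral>\<^sup>+k. ennreal (real k * real m ^ k) \<partial>sum_iid j q)
     = ennreal (real j * Hgf q (real m) ^ (j - 1) * measure_pmf.expectation q (\<lambda>k. real k * real m ^ k))"
    using A H nn_integral_k_pow_sum_iid[of "real m" j q]
    by (simp add: ennreal_power ennreal_mult ennreal_of_nat_eq_real_of_nat)
  from integrable_expectation_pmf_of_nn_integral[OF _ _ this] A H
  show "integrable (sum_iid j q) (\<lambda>k. real k * real m ^ k)"
    "measure_pmf.expectation (sum_iid j q) (\<lambda>k. real k * real m ^ k)
     = real j * Hgf q (real m) ^ (j - 1) * measure_pmf.expectation q (\<lambda>k. real k * real m ^ k)"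
    by auto
qed

lemma finite_moment_step: "finite_moment m (step m q)"
proof
  have "integrable (sum_iid m q) (\<lambda>k. real (k - 1) * real m ^ (k - 1))"
  proof (rule Bochner_Integration.integrable_bound[OF moment_sum_iid(1)])
    have "real (k - 1) * real m ^ (k - 1) \<le> real k * real m ^ k" for k
      using m_pos by (intro mult_mono power_increasing) auto
    then show "AE k in sum_iid m q. norm (real (k - 1) * real m ^ (k - 1)) \<le> norm (real k * real m ^ k)"
      by simp
  qed simp
  then show "integrable (step m q) (\<lambda>k. real k * real m ^ k)"
    by (simp add: step_def)
qed (rule m_pos)

lemma Hgf_step:
  assumes "0 < x" "x \<le> real m"
  shows "Hgf (step m q) x = Hgf q x ^ m / x + pmf (sum_iid m q) 0 * (1 - 1 / x)"
proof -
  have "(\<lambda>k. x ^ (k - 1)) = (\<lambda>k. x ^ k / x + (1 - 1 / x) * (if k = 0 then 1 else 0))"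
    using assms by (intro ext) (simp add: power_eq_if)
  moreover have "measure_pmf.expectation (sum_iid m q) (\<lambda>k. if k = 0 then 1 else 0) = pmf (sum_iid m q) 0"
    by (subst integral_measure_pmf_real[of "{0}"]) (auto split: if_splits)
  moreover have "integrable (sum_iid m q) (\<lambda>k. if k = 0 then 1 else (0::real))"
    by (rule measure_pmf.integrable_const_bound[where B = 1]) auto
  ultimately have "Hgf (step m q) x
      = measure_pmf.expectation (sum_iid m q) (\<lambda>k. x ^ k) / x + (1 - 1 / x) * pmf (sum_iid m q) 0"
    using Hgf_sum_iid(1)[of x m] assms by (simp add: Hgf_def step_def)
  then show ?thesis
    using Hgf_sum_iid(2)[of x m] assms by (simp add: Hgf_def mult.commute)
qed

lemma delta_step: "delta m (step m q) = Hgf q (real m) ^ (m - 1) * delta m q"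
proof -
  define M where "M = real m"
  have M: "M > 0" using m_pos by (simp add: M_def)
  have shift: "(\<lambda>k. (M - 1) * (real (k - 1) * M ^ (k - 1)) - M ^ (k - 1))
      = (\<lambda>k. (M - 1) / M * (real k * M ^ k) - M ^ k)"
    using M by (intro ext) (simp add: power_eq_if field_simps)
  have "integrable (sum_iid m q) (\<lambda>k. real (k - 1) * M ^ (k - 1))"
    "integrable (sum_iid m q) (\<lambda>k. M ^ (k - 1))"
    using finite_moment.moment[OF finite_moment_step] finite_moment.integrable_pow[OF finite_moment_step, of M]
    by (simp_all add: step_def M_def)
  then have "delta m (step m q)
      = measure_pmf.expectation (sum_iid m q) (\<lambda>k. (M - 1) * (real (k - 1) * M ^ (k - 1)) - M ^ (k - 1))"
    by (simp add: delta_def step_def M_def)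
  also have "\<dots> = measure_pmf.expectation (sum_iid m q) (\<lambda>k. (M - 1) / M * (real k * M ^ k) - M ^ k)"
    by (simp only: shift)
  also have "\<dots> = (M - 1) / M * (real m * Hgf q M ^ (m - 1) * measure_pmf.expectation q (\<lambda>k. real k * M ^ k))
      - Hgf q M ^ m"
    using moment_sum_iid Hgf_sum_iid[of M m] M by (simp add: M_def Hgf_def)
  also have "\<dots> = Hgf q M ^ (m - 1) * delta m q"
    using M m_pos by (cases m) (simp_all add: delta_def M_def Hgf_def field_simps)
  finally show ?thesis by (simp add: M_def)
qed

end

lemma deriv2_power_div_plus_affine:
  fixes F F' F'' G :: "real \<Rightarrow> real"
  assumes m: "m \<ge> 2" and U: "open U" "s \<in> U" "0 \<notin> U"
    and G: "\<And>z. z \<in> U \<Longrightarrow> G z = F z ^ m / z + c * (1 - 1 / z)"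
    and F: "\<And>z. z \<in> U \<Longrightarrow> (F has_real_derivative F' z) (at z)"
    and F': "\<And>z. z \<in> U \<Longrightarrow> (F' has_real_derivative F'' z) (at z)"
  shows "deriv G s = real m * F s ^ (m - 1) * F' s / s - F s ^ m / s\<^sup>2 + c / s\<^sup>2"
    and "deriv (deriv G) s
      = real m * ((real m - 1) * F s ^ (m - 2) * (F' s)\<^sup>2 + F s ^ (m - 1) * F'' s) / s
        - 2 * real m * F s ^ (m - 1) * F' s / s\<^sup>2 + 2 * F s ^ m / s ^ 3 - 2 * c / s ^ 3"
proof -
  have m_sub: "real (m - Suc 0) = real m - 1" "m - Suc (Suc 0) = m - 2" using m by auto
  define G' where "G' z = real m * F z ^ (m - 1) * F' z / z - F z ^ m / z\<^sup>2 + c / z\<^sup>2" for z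
  have "(G has_real_derivative G' z) (at z)" if z: "z \<in> U" for z
  proof (rule has_field_derivative_transform_within_open[OF _ U(1) z])
    have "z \<noteq> 0" using z U(3) by auto
    then show "((\<lambda>z. F z ^ m / z + c * (1 - 1 / z)) has_real_derivative G' z) (at z)"
      unfolding G'_def using F[OF z]
      by (auto intro!: derivative_eq_intros simp: field_simps power2_eq_square)
  qed (use G in auto)
  then have deriv_G: "deriv G z = G' z" if "z \<in> U" for z
    using that by (simp add: DERIV_imp_deriv)
  then show "deriv G s = real m * F s ^ (m - 1) * F' s / s - F s ^ m / s\<^sup>2 + c / s\<^sup>2"
    using U(2) by (simp add: G'_def)
  have "eventually (\<lambda>z. deriv G z = G' z) (nhds s)"
    using eventually_nhds_in_open[OF U(1,2)] by (rule eventually_mono) (rule deriv_G)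
  then have "deriv (deriv G) s = deriv G' s" by (rule deriv_cong_ev) simp
  moreover have "(G' has_real_derivative
      real m * ((real m - 1) * F s ^ (m - 2) * (F' s)\<^sup>2 + F s ^ (m - 1) * F'' s) / s
        - 2 * real m * F s ^ (m - 1) * F' s / s\<^sup>2 + 2 * F s ^ m / s ^ 3 - 2 * c / s ^ 3) (at s)"
    (is "(_ has_real_derivative ?G'') _")
    unfolding G'_def[abs_def] using F[OF U(2)] F'[OF U(2)] U
    by (auto intro!: derivative_eq_intros simp: m_sub field_simps power2_eq_square power3_eq_cube)
  ultimately show "deriv (deriv G) s = ?G''" by (simp add: DERIV_imp_deriv)
qed


lemma theta_step_identity:
  fixes F F' F'' G G' G'' s c :: real
  assumes "m \<ge> 2" "s \<noteq> 0"
    and "G = F ^ m / s + c * (1 - 1 / s)"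
    and "G' = real m * F ^ (m - 1) * F' / s - F ^ m / s\<^sup>2 + c / s\<^sup>2"
    and "G'' = real m * ((real m - 1) * F ^ (m - 2) * F'\<^sup>2 + F ^ (m - 1) * F'') / s
      - 2 * real m * F ^ (m - 1) * F' / s\<^sup>2 + 2 * F ^ m / s ^ 3 - 2 * c / s ^ 3"
  defines "M \<equiv> real m"
  shows "(G - s * (s - 1) * G' - (M - 1) * (M - s) / M * (2 * s * G' + s\<^sup>2 * G''))
       - M / s * (F - s * (s - 1) * F' - (M - 1) * (M - s) / M * (2 * s * F' + s\<^sup>2 * F'')) * F ^ (m - 1)
     = - ((M - s) * F ^ (m - 2) * ((M - 1) * s * F' - F)\<^sup>2 / s)"
proof -
  obtain j where j: "m = j + 2" using assms(1) by (metis add.commute le_Suc_ex)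
  have M: "M \<noteq> 0" using assms(1) by (simp add: M_def)
  have pw: "F ^ m = F * F * F ^ j" "F ^ (m - 1) = F * F ^ j" "F ^ (m - 2) = F ^ j"
    by (simp_all add: j)
  show ?thesis
    unfolding assms(3-5) M_def[symmetric] pw using assms(2) M
    by (simp add: field_simps power2_eq_square power3_eq_cube)
qed

lemma step_defect_lower_bound:
  fixes F F' Fm d s K :: real
  assumes m: "m \<ge> 2" and s: "0 < s" "s < real m"
  defines "\<phi> \<equiv> (real m - 1) * s * F' - F"
  assumes F: "0 \<le> F" "0 \<le> F'" "F + (real m - s) * F' \<le> Fm"
    and d: "\<phi> \<le> d" "0 \<le> d" and K: "1 \<le> K"
  shows "Fm ^ (m - 1) * d - real m / s * F ^ (m - 1) * d - (real m - s) * F ^ (m - 2) * \<phi>\<^sup>2 / s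
    \<ge> - (K * (real m - s) / s * (d - \<phi>)\<^sup>2 * F ^ (m - 2))"
proof -
  define M where "M = real m"
  define P where "P = F ^ (m - 2)"
  obtain j where j: "m = j + 2" using m by (metis add.commute le_Suc_ex)
  have P: "0 \<le> P" "F ^ (m - 1) = F * P" using F by (simp_all add: P_def j)
  have "F \<le> Fm" using F s mult_nonneg_nonneg[of "real m - s" F'] by linarith
  then have "(M - 1) * P * (Fm - F) \<le> Fm ^ (m - 1) - F ^ (m - 1)"
    using power_diff_ge_tangent[of F Fm "m - 1"] F by (simp add: M_def P_def j)
  moreover have "(M - 1) * P * ((M - s) * F') \<le> (M - 1) * P * (Fm - F)"
    using F m P by (intro mult_left_mono) (auto simp: M_def)
  ultimately have tangent: "F * P + (M - 1) * P * ((M - s) * F') \<le> Fm ^ (m - 1)"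
    using P by linarith
  have "\<phi> + K * (d - \<phi>) \<ge> 0"
  proof (cases "\<phi> \<ge> 0")
    case True
    then show ?thesis using d K by (simp add: mult_nonneg_nonneg)
  next
    case False
    have "\<phi> + K * (d - \<phi>) = K * d + (K - 1) * (- \<phi>)" by (simp add: algebra_simps)
    then show ?thesis
      using False d K mult_nonneg_nonneg[of K d] mult_nonneg_nonneg[of "K - 1" "- \<phi>"] by linarith
  qed
  then have "0 \<le> (M - s) * P * ((d - \<phi>) * (\<phi> + K * (d - \<phi>)))"
    using s P d by (intro mult_nonneg_nonneg) (auto simp: M_def)
  also have "\<dots> = s * ((F * P + (M - 1) * P * ((M - s) * F')) * d) - M * (F * P) * d - (M - s) * P * \<phi>\<^sup>2
      + K * (M - s) * (d - \<phi>)\<^sup>2 * P"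
    by (simp add: \<phi>_def M_def algebra_simps power2_eq_square)
  also have "\<dots> \<le> s * (Fm ^ (m - 1) * d) - M * (F * P) * d - (M - s) * P * \<phi>\<^sup>2
      + K * (M - s) * (d - \<phi>)\<^sup>2 * P"
    using mult_left_mono[OF mult_right_mono[OF tangent d(2)], of s] s by simp
  also have "\<dots> = s * (Fm ^ (m - 1) * d - M / s * (F * P) * d - (M - s) * P * \<phi>\<^sup>2 / s
      + K * (M - s) / s * (d - \<phi>)\<^sup>2 * P)"
    using s by (simp add: field_simps)
  finally show ?thesis
    using s P by (simp add: zero_le_mult_iff M_def P_def)
qed

context finite_moment
begin

lemma Theta_step_lower_bound:
  assumes m: "m \<ge> 2" and d: "0 \<le> delta m q" and s: "0 < s" "s < real m" and K: "1 \<le> K"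
  shows "Theta m (step m q) s \<ge> real m / s * Theta m q s * Hgf q s ^ (m - 1)
     - K * (real m - s) / s * (delta m q - phi m q s)\<^sup>2 * Hgf q s ^ (m - 2)"
proof -
  define M H H' H'' c where "M = real m" and "H = Hgf q s" and "H' = deriv (Hgf q) s"
    and "H'' = deriv (deriv (Hgf q)) s" and "c = pmf (sum_iid m q) 0"
  define U where "U = {0<..<real m}"
  have U: "open U" "s \<in> U" "0 \<notin> U" using s by (auto simp: U_def)
  define G' where "G' = M * H ^ (m - 1) * H' / s - H ^ m / s\<^sup>2 + c / s\<^sup>2"
  define G'' where "G'' = M * ((M - 1) * H ^ (m - 2) * H'\<^sup>2 + H ^ (m - 1) * H'') / s
      - 2 * M * H ^ (m - 1) * H' / s\<^sup>2 + 2 * H ^ m / s ^ 3 - 2 * c / s ^ 3"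
  have derivs: "deriv (Hgf (step m q)) s = G'" "deriv (deriv (Hgf (step m q))) s = G''"
    unfolding G'_def G''_def M_def H_def H'_def H''_def c_def
    by (rule deriv2_power_div_plus_affine[OF m U, where F' = "deriv (Hgf q)" and F'' = "deriv (deriv (Hgf q))"];
        simp add: U_def Hgf_step has_field_derivative_Hgf has_field_derivative_deriv_Hgf)+
  define G where "G = Hgf (step m q) s"
  define A where "A = G - s * (s - 1) * G' - (M - 1) * (M - s) / M * (2 * s * G' + s\<^sup>2 * G'')"
  define B where "B = H - s * (s - 1) * H' - (M - 1) * (M - s) / M * (2 * s * H' + s\<^sup>2 * H'')"
  have "Theta m (step m q) s = A + Hgf q M ^ (m - 1) * delta m q"
    by (simp add: Theta_def delta_step derivs A_def G_def M_def)
  moreover have "Theta m q s = B + delta m q"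
    by (simp add: Theta_def B_def M_def H_def H'_def H''_def)
  moreover have "A - M / s * B * H ^ (m - 1) = - ((M - s) * H ^ (m - 2) * ((M - 1) * s * H' - H)\<^sup>2 / s)"
    unfolding A_def B_def M_def
    by (rule theta_step_identity[OF m]) (use s in \<open>simp_all add: G_def Hgf_step G'_def G''_def M_def H_def c_def\<close>)
  ultimately have "Theta m (step m q) s - M / s * Theta m q s * H ^ (m - 1)
      = Hgf q M ^ (m - 1) * delta m q - M / s * H ^ (m - 1) * delta m q
        - (M - s) * H ^ (m - 2) * ((M - 1) * s * H' - H)\<^sup>2 / s"
    by (simp add: algebra_simps)
  moreover have "Hgf q M ^ (m - 1) * delta m q - M / s * H ^ (m - 1) * delta m q
        - (M - s) * H ^ (m - 2) * ((M - 1) * s * H' - H)\<^sup>2 / s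
      \<ge> - (K * (M - s) / s * (delta m q - ((M - 1) * s * H' - H))\<^sup>2 * H ^ (m - 2))"
    using s d K Hgf_nonneg[of s q] deriv_Hgf_nonneg[OF s] Hgf_tangent_le[OF s] phi_le_delta[OF m, of s]
    unfolding M_def H_def H'_def by (intro step_defect_lower_bound[OF m]) (auto simp: phi_def)
  ultimately show ?thesis
    by (simp add: phi_def M_def H_def H'_def)
qed

end

lemma pmf_X0law:
  assumes "0 \<le> p" "p \<le> 1"
  shows "pmf (X0law p q) k = p * pmf q k + (1 - p) * (if k = 0 then 1 else 0)"
  using assms unfolding X0law_def pmf_bind by (simp add: pmf_return)

context finite_moment
begin

lemma finite_moment_X0law:
  assumes "0 \<le> p" "p \<le> 1"
  shows "finite_moment m (X0law p q)"
proof
  have "summable (\<lambda>k. p * (pmf q k * (real k * real m ^ k)))"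
    using sums_expectation_pmf_nat[OF moment] by (intro summable_mult) (auto simp: sums_iff)
  moreover have "(\<lambda>k. pmf (X0law p q) k * \<bar>real k * real m ^ k\<bar>) = (\<lambda>k. p * (pmf q k * (real k * real m ^ k)))"
    using assms by (auto simp: pmf_X0law)
  ultimately show "integrable (X0law p q) (\<lambda>k. real k * real m ^ k)"
    by (intro integrable_pmf_nat_if_summable) simp
qed (rule m_pos)

lemma delta_X0law:
  assumes "0 \<le> p" "p \<le> 1"
  shows "delta m (X0law p q) = p * delta m q - (1 - p)"
proof -
  define w where "w k = ((real m - 1) * real k - 1) * real m ^ k" for k
  have "(\<lambda>k. p * (pmf q k * w k) + (1 - p) * (if k = 0 then w k else 0)) sums (p * delta m q + (1 - p) * w 0)"
    using delta_sums by (intro sums_add sums_mult sums_single) (simp add: w_def)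
  moreover have "(\<lambda>k. p * (pmf q k * w k) + (1 - p) * (if k = 0 then w k else 0)) = (\<lambda>k. pmf (X0law p q) k * w k)"
    using assms by (auto simp: pmf_X0law algebra_simps)
  ultimately have "delta m (X0law p q) = p * delta m q + (1 - p) * w 0"
    using finite_moment.delta_sums[OF finite_moment_X0law[OF assms]] sums_unique2 by (simp add: w_def)
  then show ?thesis by (simp add: w_def)
qed

lemma delta_nonneg:
  assumes "m \<ge> 2" "0 \<notin> set_pmf q"
  shows "0 \<le> delta m q"
proof (rule sums_le[OF _ sums_zero delta_sums])
  fix k
  show "0 \<le> pmf q k * (((real m - 1) * real k - 1) * real m ^ k)"
  proof (cases k)
    case 0
    then show ?thesis using assms(2) by (simp add: set_pmf_iff)
  next
    case (Suc i)
    then have "(real m - 1) * real k \<ge> 1 * 1" using assms(1) by (intro mult_mono) auto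
    then show ?thesis by (intro mult_nonneg_nonneg) auto
  qed
qed

lemma p_crit_eq: "p_crit m q = 1 / (1 + delta m q)"
proof -
  have "measure_pmf.expectation q (\<lambda>k. ((real m - 1) * real k - 1) * real m ^ k)
      = measure_pmf.expectation q (\<lambda>k. (real m - 1) * (real k * real m ^ k) - real m ^ k)"
    by (simp add: algebra_simps)
  also have "\<dots> = delta m q"
    using moment integrable_pow[of "real m"] by (simp add: delta_def)
  finally show ?thesis by (simp add: p_crit_def)
qed

lemma lawX_finite_moment_delta_nonneg:
  assumes "m \<ge> 2" "0 \<notin> set_pmf q" "p_crit m q < p" "p \<le> 1"
  shows "finite_moment m (lawX m p q n) \<and> 0 \<le> delta m (lawX m p q n)"
proof (induction n)
  case 0
  have "0 < 1 / (1 + delta m q)" "1 + delta m q > 0"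
    using delta_nonneg assms by auto
  then have "0 < p" "1 < p * (1 + delta m q)"
    using assms(3) unfolding p_crit_eq by (linarith, simp add: field_simps)
  then show ?case
    using finite_moment_X0law[of p] delta_X0law[of p] assms by (simp add: lawX_def algebra_simps)
next
  case (Suc n)
  then show ?case
    using finite_moment.finite_moment_step finite_moment.delta_step Hgf_nonneg
    by (simp add: lawX_def)
qed

end

theorem lemma3p3:
  fixes m :: nat and Xs :: "nat pmf" and p :: real and n :: nat
  assumes "m \<ge> 2"
    and "0 \<notin> set_pmf Xs"
    and "measure_pmf.prob Xs {2..} > 0"
    and "integrable (measure_pmf Xs) (\<lambda>k. real k * real m ^ k)"
    and "p > p_crit m Xs" and "p \<le> 1"
  shows "(\<forall>s\<in>{0..<real m}.
            0 \<le> Theta m (lawX m p Xs n) s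
          \<and> Theta m (lawX m p Xs n) s \<le> 1 + delta m (lawX m p Xs n))
       \<and> (delta m (lawX m p Xs n) \<le> 1 \<longrightarrow>
          (\<forall>s\<in>{real m / 2..<real m}.
            Theta m (lawX m p Xs (Suc n)) s \<ge>
              real m / s * Theta m (lawX m p Xs n) s * Hgf (lawX m p Xs n) s ^ (m - 1)
              - (3 ^ (m - 2) + 1) * (real m - s) / s
                * (delta m (lawX m p Xs n) - phi m (lawX m p Xs n) s)\<^sup>2
                * Hgf (lawX m p Xs n) s ^ (m - 2)))"
proof -
  interpret Xs: finite_moment m Xs
    using assms(1,4) by unfold_locales auto
  obtain moment: "finite_moment m (lawX m p Xs n)" and delta: "0 \<le> delta m (lawX m p Xs n)"
    using Xs.lawX_finite_moment_delta_nonneg assms by blast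
  have "lawX m p Xs (Suc n) = step m (lawX m p Xs n)" by (simp add: lawX_def)
  then show ?thesis
    using finite_moment.Theta_bounds[OF moment assms(1)]
      finite_moment.Theta_step_lower_bound[OF moment assms(1) delta, of _ "3 ^ (m - 2) + 1"]
    by (auto simp: divide_pos_pos)
qed

end
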